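(* Let $k:\mathcal X\times\mathcal X\to\mathbb R$ be a positive-definite kernel with RKHS $(\mathcal F_k,\langle\cdot,\cdot\rangle_k)$, let $x_1,\dots,x_N\in\mathcal X$ be distinct, $\mathbf z_N\in\mathbb R^N$, and $\nu>0$, $s\in\mathbb N$. Let $\mathbf K_N=[k(x_i,x_j)]_{i,j}$, $\mathbf k_N(x)=[k(x,x_i)]_i$, $\Sigma_N=\mathbf K_N(e^{\nu s\mathbf K_N}-I)^{-1}$, and $$\hat\pi_N(x)=\mathbf k_N(x)^\top(\mathbf K_N+\Sigma_N)^{-1}\mathbf z_N,\quad x\in\mathcal X$$ (the NTK-regime gradient-descent predictor after $s$ steps with learning rate $\nu$ and zero initialization). Define $\Phi_N:\mathbb R^N\to\mathcal F_k$, $\Phi_N\mathbf a=\sum_i a_ik(\cdot,x_i)$, with adjoint $\Phi_N^*\pi=(\pi(x_i))_{i=1}^N$, and the positive self-adjoint operator $R_N=\Phi_N(e^{\nu s\mathbf K_N}-I)^{-1}\Phi_N^*$ on $\mathcal F_k$. Then $\hat\pi_N\in\mathcal F_k$ and $$\hat\pi_N\in\operatorname*{argmin}_{\pi\in\mathcal F_k}\;\sum_{i=1}^N(\pi(x_i)-z_i)^2+\langle\pi,R_N\pi\rangle_k.$$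
   Context: The paper writes the regularizer as $\|R_N^{1/2}\pi\|_k^2=\langle\pi,R_N\pi\rangle_k$. (The paper's displayed statement has a sign typo in the exponent of $R_N$; the version above is the one consistent with $\Sigma_N$ and the proof.) *)

theory Defs
  imports "HOL-Analysis.Analysis"
begin

definition pd_kernel :: "('a \<Rightarrow> 'a \<Rightarrow> real) \<Rightarrow> bool" where
  "pd_kernel k \<longleftrightarrow> (\<forall>x y. k x y = k y x) \<and>
     (\<forall>S a. finite S \<longrightarrow> (\<exists>x\<in>S. a x \<noteq> 0) \<longrightarrow>
        (\<Sum>x\<in>S. \<Sum>y\<in>S. a x * a y * k x y) > 0)"

text \<open>An RKHS for k, presented abstractly: a real Hilbert space 'h, an injective evaluation
map ev identifying each element with a function on 'a (so F_k = range ev, with inner product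
transported from 'h), and kernel sections kf x = k(.,x) with the reproducing property.\<close>
definition is_rkhs :: "('a \<Rightarrow> 'a \<Rightarrow> real) \<Rightarrow> ('h::{real_inner,complete_space} \<Rightarrow> 'a \<Rightarrow> real)
                      \<Rightarrow> ('a \<Rightarrow> 'h) \<Rightarrow> bool" where
  "is_rkhs k ev kf \<longleftrightarrow> inj ev \<and>
     (\<forall>f x. ev f x = inner f (kf x)) \<and>
     (\<forall>x y. ev (kf y) x = k x y)"

definition mpow :: "real^'n^'n \<Rightarrow> nat \<Rightarrow> real^'n^'n" where
  "mpow A m = ((\<lambda>B. B ** A) ^^ m) (mat 1)"

definition mexp :: "real^'n^'n \<Rightarrow> real^'n^'n" where
  "mexp A = (\<chi> i j. (\<Sum>m. mpow A m $ i $ j / fact m))"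

definition gram :: "('a \<Rightarrow> 'a \<Rightarrow> real) \<Rightarrow> ('n::finite \<Rightarrow> 'a) \<Rightarrow> real^'n^'n" where
  "gram k x = (\<chi> i j. k (x i) (x j))"

definition kvec :: "('a \<Rightarrow> 'a \<Rightarrow> real) \<Rightarrow> ('n::finite \<Rightarrow> 'a) \<Rightarrow> 'a \<Rightarrow> real^'n" where
  "kvec k x t = (\<chi> i. k t (x i))"

definition SigmaN :: "('a \<Rightarrow> 'a \<Rightarrow> real) \<Rightarrow> ('n::finite \<Rightarrow> 'a) \<Rightarrow> real \<Rightarrow> nat \<Rightarrow> real^'n^'n" where
  "SigmaN k x \<nu> s = gram k x ** matrix_inv (mexp ((\<nu> * real s) *\<^sub>R gram k x) - mat 1)"

definition pihat :: "('a \<Rightarrow> 'a \<Rightarrow> real) \<Rightarrow> ('n::finite \<Rightarrow> 'a) \<Rightarrow> real^'n \<Rightarrow> real \<Rightarrow> nat \<Rightarrow> 'a \<Rightarrow> real" where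
  "pihat k x z \<nu> s t = kvec k x t \<bullet> (matrix_inv (gram k x + SigmaN k x \<nu> s) *v z)"

definition PhiN :: "('a \<Rightarrow> 'h::real_vector) \<Rightarrow> ('n::finite \<Rightarrow> 'a) \<Rightarrow> real^'n \<Rightarrow> 'h" where
  "PhiN kf x a = (\<Sum>i\<in>UNIV. (a $ i) *\<^sub>R kf (x i))"

definition PhiN_adj :: "('h \<Rightarrow> 'a \<Rightarrow> real) \<Rightarrow> ('n::finite \<Rightarrow> 'a) \<Rightarrow> 'h \<Rightarrow> real^'n" where
  "PhiN_adj ev x f = (\<chi> i. ev f (x i))"

definition RN :: "('a \<Rightarrow> 'a \<Rightarrow> real) \<Rightarrow> ('h::real_vector \<Rightarrow> 'a \<Rightarrow> real) \<Rightarrow> ('a \<Rightarrow> 'h)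
                  \<Rightarrow> ('n::finite \<Rightarrow> 'a) \<Rightarrow> real \<Rightarrow> nat \<Rightarrow> 'h \<Rightarrow> 'h" where
  "RN k ev kf x \<nu> s f = PhiN kf x (matrix_inv (mexp ((\<nu> * real s) *\<^sub>R gram k x) - mat 1)
                                    *v PhiN_adj ev x f)"

definition objective :: "('a \<Rightarrow> 'a \<Rightarrow> real) \<Rightarrow> ('h::real_inner \<Rightarrow> 'a \<Rightarrow> real) \<Rightarrow> ('a \<Rightarrow> 'h)
                  \<Rightarrow> ('n::finite \<Rightarrow> 'a) \<Rightarrow> real^'n \<Rightarrow> real \<Rightarrow> nat \<Rightarrow> 'h \<Rightarrow> real" where
  "objective k ev kf x z \<nu> s f =
     (\<Sum>i\<in>UNIV. (ev f (x i) - z $ i)\<^sup>2) + inner f (RN k ev kf x \<nu> s f)"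

end

theory Submission
  imports Defs
begin

text \<open>Write \<open>K\<close> for the Gram matrix and \<open>M = (e\<^sup>\<nu>\<^sup>s\<^sup>K - I)\<^sup>-\<^sup>1\<close>. Since \<open>K\<close> is symmetric
  positive definite, so is \<open>e\<^sup>\<nu>\<^sup>s\<^sup>K - I\<close>; hence \<open>M\<close> is symmetric positive semidefinite and
  commutes with \<open>K\<close>. By the reproducing property the objective depends on \<open>\<pi>\<close> only through
  \<open>v = \<Phi>\<^sub>N\<^sup>* \<pi>\<close>, as \<open>|v - z|\<^sup>2 + v\<^sup>T M v\<close>, a convex quadratic minimised exactly where
  \<open>v + M v = z\<close>. For \<open>\<pi> = \<Phi>\<^sub>N a\<close> with \<open>a = (K + K M)\<^sup>-\<^sup>1 z\<close> (note \<open>\<Sigma>\<^sub>N = K M\<close>) one has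
  \<open>v = K a\<close>, and \<open>(I + M) K a = (K + K M) a = z\<close>.\<close>

lemma mpow_0 [simp]: "mpow A 0 = mat 1"
  by (simp add: mpow_def)

lemma mpow_Suc [simp]: "mpow A (Suc m) = mpow A m ** A"
  by (simp add: mpow_def)

lemma mpow_add: "mpow A (m + n) = mpow A m ** mpow A n"
  by (induction n) (simp_all add: matrix_mul_assoc)

lemma mpow_Suc': "mpow A (Suc m) = A ** mpow A m"
  using mpow_add[of A 1 m] by simp

lemma mpow_commute:
  assumes "A ** K = K ** A"
  shows "mpow A m ** K = K ** mpow A m"
  by (induction m) (simp_all, metis assms matrix_mul_assoc)

lemma transpose_mpow:
  assumes "transpose A = A"
  shows "transpose (mpow A m) = mpow A m"
  by (induction m) (simp_all add: matrix_transpose_mul assms flip: mpow_Suc')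

lemma abs_mpow_entry_le:
  fixes A :: "real^'n^'n"
  shows "\<bar>mpow A m $ i $ j\<bar> \<le> (\<Sum>a\<in>UNIV. \<Sum>b\<in>UNIV. \<bar>A $ a $ b\<bar>) ^ m"
proof (induction m arbitrary: i j)
  case 0
  then show ?case by (simp add: mat_def)
next
  case (Suc m)
  define B where "B = (\<Sum>a\<in>UNIV. \<Sum>b\<in>UNIV. \<bar>A $ a $ b\<bar>)"
  have col: "(\<Sum>k\<in>UNIV. \<bar>A $ k $ j\<bar>) \<le> B"
    unfolding B_def by (intro sum_mono member_le_sum) auto
  have "B \<ge> 0"
    unfolding B_def by (intro sum_nonneg) auto
  have "\<bar>mpow A (Suc m) $ i $ j\<bar> \<le> (\<Sum>k\<in>UNIV. \<bar>mpow A m $ i $ k\<bar> * \<bar>A $ k $ j\<bar>)"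
    by (simp add: matrix_matrix_mult_def sum_abs[THEN order_trans] abs_mult)
  also have "\<dots> \<le> (\<Sum>k\<in>UNIV. B ^ m * \<bar>A $ k $ j\<bar>)"
    unfolding B_def using Suc.IH by (intro sum_mono mult_right_mono) auto
  also have "\<dots> \<le> B ^ m * B"
    using col \<open>B \<ge> 0\<close> by (simp add: sum_distrib_left[symmetric] mult_left_mono)
  finally show ?case by (simp add: B_def mult.commute)
qed

lemma summable_mpow_entry:
  fixes A :: "real^'n^'n"
  shows "summable (\<lambda>m. mpow A m $ i $ j / fact m)"
  by (rule summable_comparison_test[OF _ summable_exp])
     (use abs_mpow_entry_le[of A] in \<open>auto simp: divide_simps\<close>)

lemma mexp_sums: "(\<lambda>m. mpow A m /\<^sub>R fact m) sums mexp A"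
proof -
  have "(\<lambda>n. \<chi> i j. \<Sum>m<n. mpow A m $ i $ j / fact m) \<longlonglongrightarrow> mexp A"
    unfolding mexp_def
    by (intro tendsto_vec_lambda summable_LIMSEQ summable_mpow_entry)
  moreover have "(\<Sum>m<n. mpow A m /\<^sub>R fact m) = (\<chi> i j. \<Sum>m<n. mpow A m $ i $ j / fact m)" for n
    by (simp add: vec_eq_iff sum_component divide_inverse mult.commute)
  ultimately show ?thesis
    by (simp add: sums_def)
qed

lemma linear_mexp_sums:
  fixes L :: "real^'n^'n \<Rightarrow> 'b::real_normed_vector"
  assumes "linear L"
  shows "(\<lambda>m. L (mpow A m) /\<^sub>R fact m) sums L (mexp A)"
proof -
  interpret bounded_linear L
    using assms linear_conv_bounded_linear by blast
  show ?thesis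
    using sums[OF mexp_sums] by (simp add: scaleR)
qed

lemma mexp_commute:
  fixes A K :: "real^'n^'n"
  assumes "A ** K = K ** A"
  shows "K ** mexp A = mexp A ** K"
proof -
  have "linear (\<lambda>M. K ** M)" "linear (\<lambda>M::real^'n^'n. M ** K)"
    by (auto intro!: linearI simp: vec_eq_iff matrix_matrix_mult_def sum.distrib
        sum_distrib_left algebra_simps)
  from this[THEN linear_mexp_sums, of A] show ?thesis
    unfolding mpow_commute[OF assms] using sums_unique2 by blast
qed

lemma transpose_mexp:
  fixes A :: "real^'n^'n"
  assumes "transpose A = A"
  shows "transpose (mexp A) = mexp A"
proof -
  have "linear (transpose :: real^'n^'n \<Rightarrow> real^'n^'n)"
    by (auto intro!: linearI simp: vec_eq_iff transpose_def)
  from linear_mexp_sums[OF this, of A] show ?thesis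
    unfolding transpose_mpow[OF assms] using mexp_sums sums_unique2 by blast
qed

lemma inner_symmetric_matrix:
  fixes X :: "real^'n^'n"
  assumes "transpose X = X"
  shows "(X *v p) \<bullet> q = p \<bullet> (X *v q)"
  by (metis assms dot_lmul_matrix inner_commute transpose_matrix_vector)

lemma mpow_nonneg:
  fixes A :: "real^'n^'n"
  assumes "transpose A = A" and "\<And>d. d \<bullet> (A *v d) \<ge> 0"
  shows "d \<bullet> (mpow A m *v d) \<ge> 0"
proof -
  let ?u = "mpow A (m div 2) *v d"
  have sym: "(mpow A (m div 2) *v p) \<bullet> q = p \<bullet> (mpow A (m div 2) *v q)" for p q
    using inner_symmetric_matrix[OF transpose_mpow[OF assms(1)]] .
  show ?thesis
  proof (cases "even m")
    case True
    then have "m = m div 2 + m div 2"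
      by auto
    then have "d \<bullet> (mpow A m *v d) = ?u \<bullet> ?u"
      by (metis mpow_add matrix_vector_mul_assoc sym)
    then show ?thesis
      by simp
  next
    case False
    then have "m = Suc (m div 2 + m div 2)"
      by presburger
    then have "d \<bullet> (mpow A m *v d) = ?u \<bullet> (A *v ?u)"
      by (metis mpow_add mpow_Suc' add_Suc_right matrix_vector_mul_assoc sym)
    then show ?thesis
      using assms(2) by simp
  qed
qed

text \<open>The quadratic form of \<open>e\<^sup>A - I\<close> is the series \<open>\<Sum>\<^sub>m\<^sub>\<ge>\<^sub>1 d\<^sup>T A\<^sup>m d / m!\<close>,
  whose terms are nonnegative and whose first term is positive.\<close>
lemma mexp_minus_one_pos:
  fixes A :: "real^'n^'n"
  assumes "transpose A = A" and "\<And>d. d \<noteq> 0 \<Longrightarrow> d \<bullet> (A *v d) > 0" and "d \<noteq> 0"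
  shows "d \<bullet> ((mexp A - mat 1) *v d) > 0"
proof -
  define q where "q = (\<lambda>m. d \<bullet> (mpow A m *v d) / fact m)"
  have "linear (\<lambda>M::real^'n^'n. d \<bullet> (M *v d))"
    by (auto intro!: linearI simp: matrix_vector_mult_add_rdistrib inner_add_right
        simp flip: scaleR_matrix_vector_assoc)
  from linear_mexp_sums[OF this, of A] have "q sums (d \<bullet> (mexp A *v d))"
    by (simp add: q_def divide_inverse mult.commute)
  moreover have "q 0 = d \<bullet> d"
    by (simp add: q_def)
  ultimately have "(\<lambda>m. q (Suc m)) sums (d \<bullet> ((mexp A - mat 1) *v d))"
    by (simp add: sums_Suc_iff matrix_vector_mult_diff_rdistrib inner_diff_right)
  moreover have "0 < suminf (\<lambda>m. q (Suc m))"
  proof (rule suminf_pos2)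
    show "summable (\<lambda>m. q (Suc m))"
      using calculation sums_summable by blast
    show "0 \<le> q (Suc m)" for m
      unfolding q_def using mpow_nonneg[OF assms(1)] assms(2) by (metis divide_nonneg_pos
        fact_gt_zero less_eq_real_def inner_zero_left matrix_vector_mult_0_right)
    show "0 < q (Suc 0)"
      using assms(2,3) by (simp add: q_def)
  qed
  ultimately show ?thesis
    using sums_unique by metis
qed

lemma matrix_diff_ldistrib: "(A::'a::ring_1^'n^'m) ** (B - C) = A ** B - A ** C"
  by (simp add: vec_eq_iff matrix_matrix_mult_def sum_subtractf right_diff_distrib)

lemma matrix_diff_rdistrib: "((B::'a::ring_1^'n^'m) - C) ** A = B ** A - C ** A"
  by (simp add: vec_eq_iff matrix_matrix_mult_def sum_subtractf left_diff_distrib)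

lemma matrix_inv_right: "invertible A \<Longrightarrow> A ** matrix_inv A = mat 1"
  and matrix_inv_left: "invertible A \<Longrightarrow> matrix_inv A ** A = mat 1"
  unfolding invertible_def matrix_inv_def by (metis (mono_tags, lifting) someI_ex)+

lemma invertible_if_pos_def:
  fixes A :: "real^'n^'n"
  assumes "\<And>d. d \<noteq> 0 \<Longrightarrow> d \<bullet> (A *v d) > 0"
  shows "invertible A"
  unfolding invertible_left_inverse matrix_left_invertible_ker
  using assms by fastforce

lemma transpose_matrix_inv:
  fixes P :: "real^'n^'n"
  assumes "transpose P = P" and "invertible P"
  shows "transpose (matrix_inv P) = matrix_inv P"
proof -
  have "transpose (matrix_inv P) = (transpose (matrix_inv P) ** P) ** matrix_inv P"
    by (simp add: matrix_mul_assoc[symmetric] matrix_inv_right[OF assms(2)])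
  also have "transpose (matrix_inv P) ** P = mat 1"
    by (metis assms matrix_inv_right matrix_transpose_mul transpose_mat)
  finally show ?thesis
    by simp
qed

lemma matrix_inv_nonneg:
  fixes P :: "real^'n^'n"
  assumes "\<And>d. d \<noteq> 0 \<Longrightarrow> d \<bullet> (P *v d) > 0"
  shows "d \<bullet> (matrix_inv P *v d) \<ge> 0"
proof -
  let ?u = "matrix_inv P *v d"
  have "d = P *v ?u"
    by (simp add: matrix_vector_mul_assoc matrix_inv_right invertible_if_pos_def assms)
  then have "d \<bullet> ?u = ?u \<bullet> (P *v ?u)"
    by (metis inner_commute)
  then show ?thesis
    using assms[of ?u] by (cases "?u = 0") auto
qed

lemma matrix_inv_commute:
  assumes "invertible P" and "P ** K = K ** P"
  shows "matrix_inv P ** K = K ** matrix_inv P"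
proof -
  have "matrix_inv P ** K = matrix_inv P ** (K ** P) ** matrix_inv P"
    by (metis matrix_mul_assoc matrix_mul_rid matrix_inv_right[OF assms(1)])
  also have "\<dots> = K ** matrix_inv P"
    by (metis assms(2) matrix_mul_assoc matrix_mul_lid matrix_inv_left[OF assms(1)])
  finally show ?thesis .
qed

lemma invertible_one_plus_nonneg:
  fixes M :: "real^'n^'n"
  assumes "\<And>d. d \<bullet> (M *v d) \<ge> 0"
  shows "invertible (mat 1 + M)"
proof (rule invertible_if_pos_def)
  fix d :: "real^'n"
  assume "d \<noteq> 0"
  then show "d \<bullet> ((mat 1 + M) *v d) > 0"
    using assms[of d] by (simp add: matrix_vector_mult_add_rdistrib inner_add_right
        add_pos_nonneg)
qed

lemma regulariser_matrix:
  fixes K :: "real^'n^'n"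
  assumes "transpose K = K" and K_pos: "\<And>d. d \<noteq> 0 \<Longrightarrow> d \<bullet> (K *v d) > 0" and "c > 0"
  defines "M \<equiv> matrix_inv (mexp (c *\<^sub>R K) - mat 1)"
  shows "transpose M = M" and "\<And>d. d \<bullet> (M *v d) \<ge> 0" and "K ** M = M ** K"
proof -
  let ?A = "c *\<^sub>R K" and ?P = "mexp (c *\<^sub>R K) - mat 1"
  have A_sym: "transpose ?A = ?A"
    using assms(1) by (simp add: transpose_scalar)
  have P_pos: "d \<bullet> (?P *v d) > 0" if "d \<noteq> 0" for d
    using mexp_minus_one_pos[OF A_sym _ that] K_pos \<open>c > 0\<close>
    by (simp add: scaleR_matrix_vector_assoc[symmetric])
  have P_inv: "invertible ?P"
    using P_pos by (rule invertible_if_pos_def)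
  have "transpose ?P = ?P"
    using transpose_mexp[OF A_sym] by (simp add: vec_eq_iff transpose_def mat_def)
  then show "transpose M = M"
    unfolding M_def using P_inv by (rule transpose_matrix_inv)
  show "d \<bullet> (M *v d) \<ge> 0" for d
    unfolding M_def using P_pos by (rule matrix_inv_nonneg)
  have "?P ** K = K ** ?P"
    using mexp_commute[of ?A K]
    by (simp add: matrix_diff_ldistrib matrix_diff_rdistrib matrix_scalar_ac scalar_matrix_assoc)
  then show "K ** M = M ** K"
    unfolding M_def using matrix_inv_commute[OF P_inv] by metis
qed

lemma regularised_least_squares_min:
  fixes M :: "'a::real_inner \<Rightarrow> 'a"
  assumes "linear M" and M_sym: "\<And>u w. inner (M u) w = inner u (M w)"
    and M_nonneg: "\<And>u. inner u (M u) \<ge> 0" and "v\<^sub>0 + M v\<^sub>0 = z"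
  shows "inner (v\<^sub>0 - z) (v\<^sub>0 - z) + inner v\<^sub>0 (M v\<^sub>0) \<le> inner (v - z) (v - z) + inner v (M v)"
proof -
  interpret linear M by fact
  define d where "d = v - v\<^sub>0"
  have v: "v = v\<^sub>0 + d" and z: "z = v\<^sub>0 + M v\<^sub>0"
    using assms(4) by (simp_all add: d_def)
  have "inner (v - z) (v - z) + inner v (M v)
      = inner (v\<^sub>0 - z) (v\<^sub>0 - z) + inner v\<^sub>0 (M v\<^sub>0) + inner d d + inner d (M d)"
    unfolding v z using M_sym[of d v\<^sub>0]
    by (simp add: add inner_add_left inner_add_right inner_diff_left inner_diff_right inner_commute)
  then show ?thesis
    using M_nonneg[of d] by simp
qed

lemma transpose_gram: "pd_kernel k \<Longrightarrow> transpose (gram k x) = gram k x"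
  by (simp add: pd_kernel_def gram_def transpose_def vec_eq_iff)

lemma gram_pos:
  fixes x :: "'n::finite \<Rightarrow> 'a"
  assumes "pd_kernel k" and "inj x" and "d \<noteq> 0"
  shows "d \<bullet> (gram k x *v d) > 0"
proof -
  define a where "a y = d $ inv x y" for y
  have a: "a (x i) = d $ i" for i
    using assms(2) by (simp add: a_def)
  obtain i where "d $ i \<noteq> 0"
    using assms(3) by (metis vec_eq_iff zero_index)
  then have "\<exists>y\<in>range x. a y \<noteq> 0"
    using a by auto
  then have "(\<Sum>y\<in>range x. \<Sum>y'\<in>range x. a y * a y' * k y y') > 0"
    using assms(1) unfolding pd_kernel_def by auto
  then show ?thesis
    by (simp add: sum.reindex[OF assms(2)] a gram_def inner_vec_def matrix_vector_mult_def
        sum_distrib_left mult_ac)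
qed

lemma inner_kf:
  assumes "is_rkhs k ev kf"
  shows "inner (kf y) (kf t) = k t y"
  using assms unfolding is_rkhs_def by metis

lemma inner_PhiN:
  assumes "is_rkhs k ev kf"
  shows "inner g (PhiN kf x b) = b \<bullet> PhiN_adj ev x g"
  using assms by (simp add: is_rkhs_def PhiN_def PhiN_adj_def inner_sum_right inner_vec_def)

lemma ev_PhiN:
  assumes "is_rkhs k ev kf"
  shows "ev (PhiN kf x a) t = kvec k x t \<bullet> a"
  using assms by (simp add: is_rkhs_def PhiN_def kvec_def inner_sum_left inner_kf[OF assms]
      inner_vec_def mult.commute)

lemma PhiN_adj_PhiN:
  assumes "is_rkhs k ev kf"
  shows "PhiN_adj ev x (PhiN kf x a) = gram k x *v a"
  by (simp add: vec_eq_iff PhiN_adj_def ev_PhiN[OF assms] kvec_def gram_def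
      matrix_vector_mult_def inner_vec_def mult.commute)

lemma objective_eq:
  assumes "is_rkhs k ev kf"
  shows "objective k ev kf x z \<nu> s g =
    (PhiN_adj ev x g - z) \<bullet> (PhiN_adj ev x g - z) +
    PhiN_adj ev x g \<bullet> (matrix_inv (mexp ((\<nu> * real s) *\<^sub>R gram k x) - mat 1) *v PhiN_adj ev x g)"
proof -
  have "(\<Sum>i\<in>UNIV. (ev g (x i) - z $ i)\<^sup>2) = (PhiN_adj ev x g - z) \<bullet> (PhiN_adj ev x g - z)"
    by (simp add: inner_vec_def PhiN_adj_def power2_eq_square)
  then show ?thesis
    by (simp add: objective_def RN_def inner_PhiN[OF assms] inner_commute)
qed

lemma regularised_gram_solution:
  fixes K M :: "real^'n^'n" and z :: "real^'n"
  assumes "invertible K" and "\<And>d. d \<bullet> (M *v d) \<ge> 0" and "K ** M = M ** K"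
  defines "v \<equiv> K *v (matrix_inv (K + K ** M) *v z)"
  shows "v + M *v v = z"
proof -
  have "invertible (K + K ** M)"
    using assms(1) invertible_mult invertible_one_plus_nonneg[OF assms(2)]
    by (metis matrix_add_ldistrib matrix_mul_rid)
  have "v + M *v v = (K + M ** K) *v (matrix_inv (K + K ** M) *v z)"
    by (simp add: v_def matrix_vector_mult_add_rdistrib flip: matrix_vector_mul_assoc)
  also have "\<dots> = z"
    unfolding assms(3)[symmetric] using \<open>invertible (K + K ** M)\<close>
    by (simp add: matrix_vector_mul_assoc matrix_inv_right)
  finally show ?thesis .
qed

theorem mainTheorem8:
  fixes k :: "'a \<Rightarrow> 'a \<Rightarrow> real"
    and ev :: "'h::{real_inner,complete_space} \<Rightarrow> 'a \<Rightarrow> real"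
    and kf :: "'a \<Rightarrow> 'h"
    and x :: "'n::finite \<Rightarrow> 'a"
    and z :: "real^'n"
    and \<nu> :: real and s :: nat
  assumes "pd_kernel k"
    and "is_rkhs k ev kf"
    and "inj x"
    and "\<nu> > 0"
    and "s \<ge> 1"
  shows "\<exists>f. ev f = pihat k x z \<nu> s \<and>
             (\<forall>g. objective k ev kf x z \<nu> s f \<le> objective k ev kf x z \<nu> s g)"
proof -
  define K where "K = gram k x"
  define M where "M = matrix_inv (mexp ((\<nu> * real s) *\<^sub>R K) - mat 1)"
  define a where "a = matrix_inv (K + K ** M) *v z"
  have K_sym: "transpose K = K"
    unfolding K_def using assms(1) by (rule transpose_gram)
  have K_pos: "\<And>d. d \<noteq> 0 \<Longrightarrow> d \<bullet> (K *v d) > 0"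
    unfolding K_def using gram_pos[OF assms(1,3)] .
  have "\<nu> * real s > 0"
    using assms(4,5) by simp
  note M = regulariser_matrix[OF K_sym K_pos this, folded M_def]
  have fit: "K *v a + M *v (K *v a) = z"
    unfolding a_def using invertible_if_pos_def[OF K_pos] M(2,3) by (rule regularised_gram_solution)
  have "linear ((*v) M)" "\<And>u w. (M *v u) \<bullet> w = u \<bullet> (M *v w)"
    using inner_symmetric_matrix[OF M(1)] by auto
  note least_squares = regularised_least_squares_min[OF this M(2) fit]
  show ?thesis
  proof (intro exI conjI allI)
    show "ev (PhiN kf x a) = pihat k x z \<nu> s"
      by (simp add: fun_eq_iff ev_PhiN[OF assms(2)] pihat_def SigmaN_def a_def K_def M_def)
    show "objective k ev kf x z \<nu> s (PhiN kf x a) \<le> objective k ev kf x z \<nu> s g" for g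
      using least_squares by (simp add: objective_eq[OF assms(2)] PhiN_adj_PhiN[OF assms(2)]
          flip: K_def M_def)
  qed
qed

end
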